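(* Let $\mathbb{S}\subseteq\mathbb{R}$ be an interval, let $\gamma>0$, and let $f:\mathbb{S}\to(0,\infty)$ be twice differentiable such that $H(z)=\gamma\log\big(1+[f(z)]^{1/\gamma}\big)$ is twice continuously differentiable on $\mathbb{S}$. Then the scalar matching loss $\mathcal{L}_m(\hat s,s)=H(\hat s)-H(s)-(\hat s-s)H'(s)$ is convex in $\hat s$ over $\mathbb{S}$ (for all $s\in\mathbb{S}$) if and only if $$f''(z)+\Big[\frac1\gamma-1-\frac1\gamma\cdot\frac{[f(z)]^{1/\gamma}}{1+[f(z)]^{1/\gamma}}\Big]\frac{[f'(z)]^2}{f(z)}\ge0\quad\text{for all }z\in\mathbb{S}.$$
   Context: $f$ is the score-transform function; equivalently $f=e^{Q}$ with $Q$ the log score-transform, and $H(z)=\gamma\log(1+e^{Q(z)/\gamma})$ is the $\gamma$-regularized composite Softplus primitive. *)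

theory Defs
  imports "HOL-Analysis.Analysis"
begin

definition Hsp :: "real \<Rightarrow> (real \<Rightarrow> real) \<Rightarrow> real \<Rightarrow> real" where
  "Hsp \<gamma> f z = \<gamma> * ln (1 + f z powr (1 / \<gamma>))"

definition match_loss :: "(real \<Rightarrow> real) \<Rightarrow> (real \<Rightarrow> real) \<Rightarrow> real \<Rightarrow> real \<Rightarrow> real" where
  "match_loss H H' shat s = H shat - H s - (shat - s) * H' s"

end

theory Submission
  imports Defs
begin

text \<open>The matching loss differs from \<open>H\<close> by a function that is affine in \<open>shat\<close>, so it is
  convex for every \<open>s\<close> exactly when \<open>H\<close> is convex, i.e. (on an interval without isolated points)
  when \<open>H'' \<ge> 0\<close>. With \<open>u = f powr (1/\<gamma>)\<close> one computes \<open>H' = u f' / (f (1 + u))\<close> and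
  \<open>H'' = u / ((1 + u) f) \<cdot> C\<close>, where \<open>C\<close> is the expression in the claimed condition; the factor
  in front of \<open>C\<close> is positive.\<close>

lemma MVT_within_convex:
  fixes g g' :: "real \<Rightarrow> real"
  assumes S: "convex S" and ab: "a \<in> S" "b \<in> S" "a < b"
    and g: "\<And>z. z \<in> S \<Longrightarrow> (g has_real_derivative g' z) (at z within S)"
  obtains \<xi> where "a < \<xi>" "\<xi> < b" "g b - g a = (b - a) * g' \<xi>"
proof -
  have sub: "{a..b} \<subseteq> S"
    using atMostAtLeast_subset_convex[OF S ab] .
  have cont: "continuous_on {a..b} g"
    using DERIV_continuous_on[OF g] sub continuous_on_subset by blast
  have "{a<..<b} \<subseteq> interior S"
    using sub by (intro interior_maximal) auto
  then have g_at: "(g has_real_derivative g' x) (at x)" if "a < x" "x < b" for x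
  proof -
    have x: "x \<in> interior S"
      using \<open>{a<..<b} \<subseteq> interior S\<close> that by auto
    show ?thesis
      using g[OF interior_subset[THEN subsetD, OF x]] unfolding at_within_interior[OF x] .
  qed
  obtain l \<xi> where \<xi>: "a < \<xi>" "\<xi> < b" "DERIV g \<xi> :> l" "g b - g a = (b - a) * l"
    using MVT[OF \<open>a < b\<close> cont] g_at real_differentiable_def by meson
  show thesis
    using that \<xi> DERIV_unique[OF \<xi>(3) g_at[OF \<xi>(1,2)]] by simp
qed

lemma deriv_nonneg_imp_mono_on:
  fixes g g' :: "real \<Rightarrow> real"
  assumes S: "convex S"
    and g: "\<And>z. z \<in> S \<Longrightarrow> (g has_real_derivative g' z) (at z within S)"
    and nonneg: "\<And>z. z \<in> S \<Longrightarrow> g' z \<ge> 0"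
  shows "mono_on S g"
proof (rule mono_onI)
  fix x y assume xy: "x \<in> S" "y \<in> S" "x \<le> y"
  show "g x \<le> g y"
  proof (cases "x = y")
    case False
    with xy have "x < y" by simp
    obtain \<xi> where \<xi>: "x < \<xi>" "\<xi> < y" "g y - g x = (y - x) * g' \<xi>"
      using MVT_within_convex[OF S xy(1,2) \<open>x < y\<close> g] .
    have "\<xi> \<in> S"
      using atMostAtLeast_subset_convex[OF S xy(1,2) \<open>x < y\<close>] \<xi>(1,2) by auto
    then have "(y - x) * g' \<xi> \<ge> 0"
      using nonneg \<open>x < y\<close> by simp
    then show ?thesis
      using \<xi>(3) by linarith
  qed simp
qed

lemma mono_on_deriv_imp_convex_on:
  fixes g g' :: "real \<Rightarrow> real"
  assumes S: "convex S"
    and g: "\<And>z. z \<in> S \<Longrightarrow> (g has_real_derivative g' z) (at z within S)"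
    and mono: "mono_on S g'"
  shows "convex_on S g"
proof (rule pos_convex_function[OF S])
  have secant_bounds: "g' x * (y - x) \<le> g y - g x \<and> g y - g x \<le> g' y * (y - x)"
    if xy: "x \<in> S" "y \<in> S" "x < y" for x y
  proof -
    obtain \<xi> where \<xi>: "x < \<xi>" "\<xi> < y" "g y - g x = (y - x) * g' \<xi>"
      using MVT_within_convex[OF S xy g] .
    have "\<xi> \<in> S"
      using atMostAtLeast_subset_convex[OF S xy] \<xi>(1,2) by auto
    then have "g' x \<le> g' \<xi>" "g' \<xi> \<le> g' y"
      using mono_onD[OF mono] xy \<xi>(1,2) by simp_all
    then have "(y - x) * g' x \<le> (y - x) * g' \<xi>" "(y - x) * g' \<xi> \<le> (y - x) * g' y"
      using xy(3) by simp_all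
    then show ?thesis
      using \<xi>(3) by (simp add: mult.commute)
  qed
  fix x y assume "x \<in> S" "y \<in> S"
  then show "g' x * (y - x) \<le> g y - g x"
    using secant_bounds[of x y] secant_bounds[of y x]
    by (cases x y rule: linorder_cases) (auto simp: right_diff_distrib)
qed

lemma convex_on_imp_deriv_mono_on:
  fixes g g' :: "real \<Rightarrow> real"
  assumes cvx: "convex_on S g"
    and g: "\<And>z. z \<in> S \<Longrightarrow> (g has_real_derivative g' z) (at z within S)"
  shows "mono_on S g'"
proof (rule mono_onI)
  fix x y assume xy: "x \<in> S" "y \<in> S" "x \<le> y"
  have swap: "(a - b) / (c - d) = (b - a) / (d - c)" for a b c d :: real
    by (metis minus_diff_eq minus_divide_divide)
  show "g' x \<le> g' y"
  proof (cases "x = y")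
    case False
    with xy have "x < y" by simp
    have sub: "{x..y} \<subseteq> S"
      using atMostAtLeast_subset_convex[OF convex_on_imp_convex[OF cvx] xy(1,2) \<open>x < y\<close>] .
    let ?slope = "(g y - g x) / (y - x)"
    have "((\<lambda>t. (g t - g x) / (t - x)) \<longlongrightarrow> g' x) (at_right x)"
      using DERIV_subset[OF g[OF xy(1)] sub]
      unfolding has_field_derivative_iff at_within_Icc_at_right[OF \<open>x < y\<close>] .
    moreover have "\<forall>\<^sub>F t in at_right x. (g t - g x) / (t - x) \<le> ?slope"
      using eventually_at_right_real[OF \<open>x < y\<close>]
    proof eventually_elim
      case (elim t)
      then have "(g x - g t) / (x - t) \<le> (g x - g y) / (x - y)"
        using convex_on_slope_le(1)[OF cvx xy(1,2)] by simp
      then show ?case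
        by (simp only: swap[of "g x" "g t" x t] swap[of "g x" "g y" x y])
    qed
    ultimately have "g' x \<le> ?slope"
      using tendsto_upperbound trivial_limit_at_right_real by blast
    have "((\<lambda>t. (g t - g y) / (t - y)) \<longlongrightarrow> g' y) (at_left y)"
      using DERIV_subset[OF g[OF xy(2)] sub]
      unfolding has_field_derivative_iff at_within_Icc_at_left[OF \<open>x < y\<close>] .
    moreover have "\<forall>\<^sub>F t in at_left y. ?slope \<le> (g t - g y) / (t - y)"
      using eventually_at_left_real[OF \<open>x < y\<close>]
    proof eventually_elim
      case (elim t)
      then have "(g x - g y) / (x - y) \<le> (g t - g y) / (t - y)"
        using convex_on_slope_le(2)[OF cvx xy(1,2)] by simp
      then show ?case
        by (simp only: swap[of "g x" "g y" x y])
    qed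
    ultimately have "?slope \<le> g' y"
      using tendsto_lowerbound trivial_limit_at_left_real by blast
    with \<open>g' x \<le> ?slope\<close> show ?thesis
      by linarith
  qed simp
qed

lemma mono_on_imp_deriv_nonneg_within:
  fixes g :: "real \<Rightarrow> real"
  assumes mono: "mono_on S g"
    and g: "(g has_real_derivative D) (at z within S)"
    and z: "z \<in> S" "at z within S \<noteq> bot"
  shows "D \<ge> 0"
proof (rule tendsto_lowerbound)
  show "((\<lambda>t. (g t - g z) / (t - z)) \<longlongrightarrow> D) (at z within S)"
    using g unfolding has_field_derivative_iff .
  show "\<forall>\<^sub>F t in at z within S. 0 \<le> (g t - g z) / (t - z)"
    unfolding eventually_at_filter
  proof (intro always_eventually allI impI)
    fix t assume "t \<noteq> z" "t \<in> S"
    then show "0 \<le> (g t - g z) / (t - z)"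
      using mono_onD[OF mono] z(1)
      by (cases t z rule: linorder_cases) (auto simp: divide_nonpos_neg)
  qed
  show "at z within S \<noteq> bot"
    using z(2) .
qed

lemma convex_on_iff_second_deriv_nonneg:
  fixes g g' g'' :: "real \<Rightarrow> real"
  assumes S: "convex S" and perfect: "\<And>z. z \<in> S \<Longrightarrow> at z within S \<noteq> bot"
    and g: "\<And>z. z \<in> S \<Longrightarrow> (g has_real_derivative g' z) (at z within S)"
    and g': "\<And>z. z \<in> S \<Longrightarrow> (g' has_real_derivative g'' z) (at z within S)"
  shows "convex_on S g \<longleftrightarrow> (\<forall>z\<in>S. g'' z \<ge> 0)"
proof
  assume "convex_on S g"
  then have mono: "mono_on S g'"
    using g by (rule convex_on_imp_deriv_mono_on)
  show "\<forall>z\<in>S. g'' z \<ge> 0"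
  proof
    fix z assume z: "z \<in> S"
    show "g'' z \<ge> 0"
      using mono_on_imp_deriv_nonneg_within[OF mono g'[OF z] z perfect[OF z]] .
  qed
next
  assume "\<forall>z\<in>S. g'' z \<ge> 0"
  then have "mono_on S g'"
    by (intro deriv_nonneg_imp_mono_on[OF S g']) auto
  with S g show "convex_on S g"
    by (rule mono_on_deriv_imp_convex_on)
qed

lemma at_within_convex_neq_bot:
  fixes S :: "real set"
  assumes "convex S" "interior S \<noteq> {}" "z \<in> S"
  shows "at z within S \<noteq> bot"
proof -
  have "S \<noteq> {a}" for a
    using assms(2) by auto
  then show ?thesis
    using connected_imp_perfect[OF convex_connected[OF assms(1)] assms(3)] trivial_limit_within by blast
qed

lemma convex_on_add_affine_iff:
  fixes h :: "real \<Rightarrow> real"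
  shows "convex_on S (\<lambda>x. h x + (c * x + d)) \<longleftrightarrow> convex_on S h"
proof -
  have affine: "convex_on S (\<lambda>x. k * x + e)" if "convex S" for k e :: real
    by (rule convex_onI[OF _ that]) (simp add: algebra_simps)
  show ?thesis
  proof
    assume cvx: "convex_on S (\<lambda>x. h x + (c * x + d))"
    have "convex_on S (\<lambda>x. (h x + (c * x + d)) + (- c * x + - d))"
      using convex_on_add[OF cvx affine[OF convex_on_imp_convex[OF cvx]]] .
    then show "convex_on S h"
      by simp
  next
    assume cvx: "convex_on S h"
    show "convex_on S (\<lambda>x. h x + (c * x + d))"
      using convex_on_add[OF cvx affine[OF convex_on_imp_convex[OF cvx]]] .
  qed
qed

lemma convex_on_match_loss_iff:
  "convex_on S (\<lambda>x. match_loss h h' x s) \<longleftrightarrow> convex_on S h"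
proof -
  have "match_loss h h' x s = h x + (- h' s * x + (s * h' s - h s))" for x
    unfolding match_loss_def by (simp add: algebra_simps)
  then have affine_diff: "(\<lambda>x. match_loss h h' x s) = (\<lambda>x. h x + (- h' s * x + (s * h' s - h s)))"
    by (rule ext)
  show ?thesis
    unfolding affine_diff by (rule convex_on_add_affine_iff)
qed

lemma has_real_derivative_powr_within:
  fixes f :: "real \<Rightarrow> real"
  assumes "f z > 0" "(f has_real_derivative f'z) (at z within S)"
  shows "((\<lambda>z. f z powr r) has_real_derivative r * f z powr r * f'z / f z) (at z within S)"
  using assms by (auto intro!: derivative_eq_intros simp: powr_diff)

lemma Hsp_has_real_derivative:
  fixes f :: "real \<Rightarrow> real"
  assumes "\<gamma> > 0" "f z > 0" "(f has_real_derivative f'z) (at z within S)"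
  shows "(Hsp \<gamma> f has_real_derivative
      f z powr (1 / \<gamma>) * f'z / (f z * (1 + f z powr (1 / \<gamma>)))) (at z within S)"
proof -
  define u where "u z = f z powr (1 / \<gamma>)" for z
  have u: "(u has_real_derivative (1 / \<gamma>) * u z * f'z / f z) (at z within S)"
    unfolding u_def[abs_def] using has_real_derivative_powr_within[OF assms(2,3)] .
  have "u z > 0"
    using assms(2) by (simp add: u_def)
  then have "((\<lambda>z. \<gamma> * ln (1 + u z)) has_real_derivative
      \<gamma> * (1 / (1 + u z) * (0 + (1 / \<gamma>) * u z * f'z / f z))) (at z within S)"
    by (intro DERIV_cmult DERIV_chain2[OF DERIV_ln_divide] DERIV_add DERIV_const u) simp
  also have "\<gamma> * (1 / (1 + u z) * (0 + (1 / \<gamma>) * u z * f'z / f z)) = u z * f'z / (f z * (1 + u z))"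
    using assms(1) by simp
  finally show ?thesis
    by (simp add: Hsp_def [abs_def] u_def)
qed

lemma Hsp_deriv_has_real_derivative:
  fixes f f' :: "real \<Rightarrow> real"
  assumes "\<gamma> > 0" "f z > 0"
    and f: "(f has_real_derivative f' z) (at z within S)"
    and f': "(f' has_real_derivative f'' z) (at z within S)"
  shows "((\<lambda>z. f z powr (1 / \<gamma>) * f' z / (f z * (1 + f z powr (1 / \<gamma>)))) has_real_derivative
      f z powr (1 / \<gamma>) / ((1 + f z powr (1 / \<gamma>)) * f z) *
      (f'' z + (1 / \<gamma> - 1 - (1 / \<gamma>) * (f z powr (1 / \<gamma>) / (1 + f z powr (1 / \<gamma>)))) * ((f' z)\<^sup>2 / f z)))
    (at z within S)"
proof -
  define u where "u z = f z powr (1 / \<gamma>)" for z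
  define u' where "u' = (1 / \<gamma>) * u z * f' z / f z"
  have u: "(u has_real_derivative u') (at z within S)"
    unfolding u_def[abs_def] u'_def using has_real_derivative_powr_within[OF assms(2) f] .
  have "u z > 0"
    using assms(2) by (simp add: u_def)
  have num: "((\<lambda>z. u z * f' z) has_real_derivative u z * f'' z + u' * f' z) (at z within S)"
    using DERIV_mult'[OF u f'] .
  have den: "((\<lambda>z. f z * (1 + u z)) has_real_derivative f z * u' + f' z * (1 + u z)) (at z within S)"
    using DERIV_mult'[OF f DERIV_add[OF DERIV_const u]] by simp
  have "f z * (1 + u z) \<noteq> 0"
    using assms(2) \<open>u z > 0\<close> by auto
  with DERIV_divide[OF num den] have "((\<lambda>z. u z * f' z / (f z * (1 + u z))) has_real_derivative
      ((u z * f'' z + u' * f' z) * (f z * (1 + u z)) - u z * f' z * (f z * u' + f' z * (1 + u z)))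
        / (f z * (1 + u z) * (f z * (1 + u z)))) (at z within S)" .
  also have "((u z * f'' z + u' * f' z) * (f z * (1 + u z)) - u z * f' z * (f z * u' + f' z * (1 + u z)))
        / (f z * (1 + u z) * (f z * (1 + u z)))
      = u z / ((1 + u z) * f z) * (f'' z + (1 / \<gamma> - 1 - (1 / \<gamma>) * (u z / (1 + u z))) * ((f' z)\<^sup>2 / f z))"
    using assms(1,2) \<open>u z > 0\<close> unfolding u'_def
    by (simp add: divide_simps power2_eq_square) (simp add: algebra_simps)
  finally show ?thesis
    by (simp add: u_def)
qed

lemma Hsp_second_deriv_eq:
  fixes f f' f'' H' H'' :: "real \<Rightarrow> real"
  assumes perfect: "\<And>z. z \<in> S \<Longrightarrow> at z within S \<noteq> bot" and gamma_pos: "\<gamma> > 0"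
    and f_pos: "\<forall>z\<in>S. f z > 0"
    and f_d1: "\<forall>z\<in>S. (f has_real_derivative f' z) (at z within S)"
    and f_d2: "\<forall>z\<in>S. (f' has_real_derivative f'' z) (at z within S)"
    and H_d1: "\<forall>z\<in>S. (Hsp \<gamma> f has_real_derivative H' z) (at z within S)"
    and H_d2: "\<forall>z\<in>S. (H' has_real_derivative H'' z) (at z within S)"
    and z: "z \<in> S"
  shows "H'' z = f z powr (1 / \<gamma>) / ((1 + f z powr (1 / \<gamma>)) * f z) *
      (f'' z + (1 / \<gamma> - 1 - (1 / \<gamma>) * (f z powr (1 / \<gamma>) / (1 + f z powr (1 / \<gamma>)))) * ((f' z)\<^sup>2 / f z))"
    (is "_ = ?H''")
proof -
  define Hd where "Hd x = f x powr (1 / \<gamma>) * f' x / (f x * (1 + f x powr (1 / \<gamma>)))" for x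
  have H'_eq: "H' x = Hd x" if "x \<in> S" for x
    using has_field_derivative_unique[OF H_d1[rule_format, OF that]
        Hsp_has_real_derivative[OF gamma_pos, of f x] perfect[OF that]] f_pos f_d1 that
    unfolding Hd_def by blast
  have "(Hd has_real_derivative ?H'') (at z within S)"
    unfolding Hd_def[abs_def]
    using Hsp_deriv_has_real_derivative[OF gamma_pos] f_pos f_d1 f_d2 z by blast
  then have "(H' has_real_derivative ?H'') (at z within S)"
    using has_field_derivative_transform_within[OF _ zero_less_one z] H'_eq by metis
  then show ?thesis
    using has_field_derivative_unique H_d2 perfect z by blast
qed

theorem corollaryG2:
  fixes S :: "real set" and \<gamma> :: real
    and f f' f'' :: "real \<Rightarrow> real"
    and H' H'' :: "real \<Rightarrow> real"
  assumes S_interval: "is_interval S"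
    and S_nondeg: "interior S \<noteq> {}"
    and gamma_pos: "\<gamma> > 0"
    and f_pos: "\<forall>z\<in>S. f z > 0"
    and f_d1: "\<forall>z\<in>S. (f has_real_derivative f' z) (at z within S)"
    and f_d2: "\<forall>z\<in>S. (f' has_real_derivative f'' z) (at z within S)"
    and H_d1: "\<forall>z\<in>S. (Hsp \<gamma> f has_real_derivative H' z) (at z within S)"
    and H_d2: "\<forall>z\<in>S. (H' has_real_derivative H'' z) (at z within S)"
    and H_C2: "continuous_on S H''"
  shows "(\<forall>s\<in>S. convex_on S (\<lambda>shat. match_loss (Hsp \<gamma> f) H' shat s)) \<longleftrightarrow>
         (\<forall>z\<in>S. f'' z + (1 / \<gamma> - 1 - (1 / \<gamma>) * (f z powr (1 / \<gamma>) / (1 + f z powr (1 / \<gamma>))))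
                    * ((f' z)\<^sup>2 / f z) \<ge> 0)"
proof -
  define C where "C z = f'' z + (1 / \<gamma> - 1 - (1 / \<gamma>) * (f z powr (1 / \<gamma>) / (1 + f z powr (1 / \<gamma>))))
    * ((f' z)\<^sup>2 / f z)" for z
  have S: "convex S"
    using S_interval is_interval_convex_1 by blast
  note perfect = at_within_convex_neq_bot[OF S S_nondeg]
  have sign: "H'' z \<ge> 0 \<longleftrightarrow> C z \<ge> 0" if "z \<in> S" for z
  proof -
    let ?k = "f z powr (1 / \<gamma>) / ((1 + f z powr (1 / \<gamma>)) * f z)"
    have "?k > 0"
      using f_pos that by (intro divide_pos_pos mult_pos_pos add_pos_pos) auto
    moreover have "H'' z = ?k * C z"
      using Hsp_second_deriv_eq[OF perfect gamma_pos f_pos f_d1 f_d2 H_d1 H_d2 that]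
      unfolding C_def .
    ultimately show ?thesis
      using mult_le_cancel_left_pos[of ?k 0 "C z"] by simp
  qed
  have "(\<forall>s\<in>S. convex_on S (\<lambda>shat. match_loss (Hsp \<gamma> f) H' shat s)) \<longleftrightarrow> convex_on S (Hsp \<gamma> f)"
    using convex_on_match_loss_iff S_nondeg interior_subset by blast
  also have "\<dots> \<longleftrightarrow> (\<forall>z\<in>S. H'' z \<ge> 0)"
    using convex_on_iff_second_deriv_nonneg[OF S perfect] H_d1 H_d2 by blast
  also have "\<dots> \<longleftrightarrow> (\<forall>z\<in>S. C z \<ge> 0)"
    using sign by blast
  finally show ?thesis
    unfolding C_def .
qed

end
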